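(* Let $q$ be an odd prime power and $n\ge 1$ an integer, and let $\mu\in\mathbb{F}_{q^2}$ with $\mu^2=-1$. (i) If $q\equiv1\pmod 4$ and $\gcd(n+1,q(q^2-1)/2)=1$, then $C_n(a)$ is LCD for every $a\in\mathbb{F}_q\setminus\{\mu+2,-\mu+2,\mu-2,-\mu-2\}$. (ii) If $q\equiv 3\pmod 4$, $\gcd(n+1,q)=1$, and $\gcd(n+1,(q^4-1)/2)$ divides $(q-1)/2$, then $C_n(a)$ is LCD for every $a\in\mathbb{F}_q$.
   Context: For $a\in\mathbb{F}_q$ and $n \ge 1$, $T_n(a)$ denotes the $n\times n$ symmetric tridiagonal Toeplitz matrix over $\mathbb{F}_q$ with all diagonal entries equal to $a$, all entries on the first super- and sub-diagonals equal to $1$, and all other entries $0$. $C_n(a)$ is the $[2n,n]$ linear code over $\mathbb{F}_q$ with generator matrix $[I_n \mid T_n(a)]$. A linear code $C$ is LCD if $C\cap C^\perp=\{0\}$ (Euclidean dual). *)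

theory Defs
  imports "Jordan_Normal_Form.Matrix"
begin

definition tridiag_toeplitz :: "nat \<Rightarrow> 'a::field \<Rightarrow> 'a mat" where
  "tridiag_toeplitz n a = mat n n (\<lambda>(i,j). if i = j then a
      else if i = j + 1 \<or> j = i + 1 then 1 else 0)"

definition gen_matrix :: "nat \<Rightarrow> 'a::field \<Rightarrow> 'a mat" where
  "gen_matrix n a = mat n (2*n) (\<lambda>(i,j). if j < n then (if i = j then 1 else 0)
      else tridiag_toeplitz n a $$ (i, j - n))"

definition code_of :: "'a::field mat \<Rightarrow> 'a vec set" where
  "code_of G = {transpose_mat G *\<^sub>v x | x. x \<in> carrier_vec (dim_row G)}"

definition dual_code :: "nat \<Rightarrow> 'a::field vec set \<Rightarrow> 'a vec set" where
  "dual_code N C = {y \<in> carrier_vec N. \<forall>c\<in>C. scalar_prod c y = 0}"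

definition is_LCD :: "nat \<Rightarrow> 'a::field vec set \<Rightarrow> bool" where
  "is_LCD N C \<longleftrightarrow> C \<inter> dual_code N C = {0\<^sub>v N}"

definition C_code :: "nat \<Rightarrow> 'a::field \<Rightarrow> 'a vec set" where
  "C_code n a = code_of (gen_matrix n a)"

end

theory Submission
  imports Defs "HOL-Algebra.Algebraic_Closure_Type" "HOL-Algebra.Sylow" "HOL-Number_Theory.Residues"
begin

(* Since [I | T] [I | T]^T = I + T^2 for T = T_n(a), the code C_n(a) is LCD as soon as -1 is not
   an eigenvalue of T^2, i.e. T has no eigenvalue v with v^2 = -1 over the algebraic closure.
   An eigenvector of T for v satisfies the recurrence of the Lucas sequence
   U_0 = 0, U_1 = 1, U_(k+2) = s U_(k+1) - U_k with s = v - a, padded by zeros at both ends, so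
   U_(n+1)(v - a) = 0. Writing v - a = t + 1/t, this means t^(2(n+1)) = 1 and t^2 <> 1.
   Now apply the Frobenius x -> x^q, which fixes a. If q = 1 mod 4 it fixes v, hence t + 1/t,
   so t^(q-1) = 1 or t^(q+1) = 1, and the gcd hypothesis forces t^2 = 1. If q = 3 mod 4 it maps
   v to -v, so t + 1/t is fixed by x -> x^(q^2); then t^(q^4-1) = 1, the gcd hypothesis gives
   t^(q-1) = 1, so v - a and with it v are fixed by the Frobenius, contradicting v^q = -v. *)

section \<open>Finite fields\<close>

lemma nat_pow_ring_of_type_algebra:
  "x [^]\<^bsub>ring_of_type_algebra\<^esub> (n::nat) = (x::'a::ring_1) ^ n"
  by (induction n) (simp_all add: ring_of_type_algebra_def power_commutes)

lemma nat_pow_additive_monoid: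
  "x [^]\<^bsub>\<lparr>carrier = H, mult = (+), one = 0\<rparr>\<^esub> (n::nat) = of_nat n * (x::'a::semiring_1)"
  by (induction n) (simp_all add: algebra_simps)

lemma prime_CHAR_finite_field: "normalization_semidom_class.prime CHAR('a::{finite,field})"
  by (simp add: prime_CHAR_semidom finite_imp_CHAR_pos)

lemma power_card_finite_field:
  fixes x :: "'a::{finite,field}"
  shows "x ^ card (UNIV :: 'a set) = x"
proof (cases "x = 0")
  case False
  interpret field "ring_of_type_algebra :: 'a ring" by rule
  have "x ^ (card (UNIV :: 'a set) - 1) = 1"
    using group.pow_order_eq_1[OF field_mult_group, of x] False
    by (simp add: order_mult_of Coset.order_def Multiplicative_Group.nat_pow_mult_of
        nat_pow_ring_of_type_algebra) (simp add: ring_of_type_algebra_def)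
  moreover have "x ^ card (UNIV :: 'a set) = x ^ (card (UNIV :: 'a set) - 1) * x"
    using finite_UNIV_card_ge_0[where ?'a='a] by (simp flip: power_Suc2)
  ultimately show ?thesis
    by simp
qed (simp add: finite_UNIV_card_ge_0)

text \<open>By Sylow, a prime factor r of the order of the additive group yields h \<noteq> 0 with r h = 0,
  so CHAR('a) divides r.\<close>

lemma card_finite_field_eq_CHAR_power:
  "\<exists>k. card (UNIV :: 'a::{finite,field} set) = CHAR('a) ^ k"
proof -
  let ?R = "ring_of_type_algebra :: 'a ring"
  interpret field ?R by rule
  have "r = CHAR('a)"
    if r: "normalization_semidom_class.prime r" "r dvd card (UNIV :: 'a set)" for r
  proof -
    obtain m where m: "card (UNIV :: 'a set) = r * m"
      using r by (auto elim: dvdE)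
    obtain H where H: "subgroup H (add_monoid ?R)" "card H = r ^ 1"
      using sylow_thm[OF r(1) a_group, of 1 m] by (auto simp: Coset.order_def m ring_of_type_algebra_def)
    have "\<not> H \<subseteq> {0}"
      using H(2) card_mono[of "{0::'a}" H] prime_gt_1_nat[OF r(1)] by auto
    then obtain h where h: "h \<in> H" "h \<noteq> 0"
      by blast
    have "of_nat r * h = 0"
      using group.pow_order_eq_1[OF subgroup.subgroup_is_group[OF H(1) a_group], of h] h H(2)
      by (simp add: Coset.order_def ring_of_type_algebra_def nat_pow_additive_monoid)
    then have "CHAR('a) dvd r"
      using h by (simp add: of_nat_eq_0_iff_char_dvd)
    then show ?thesis
      using r(1) prime_CHAR_finite_field[where 'a='a] by (metis primes_dvd_imp_eq)
  qed
  then have "prime_factors (card (UNIV :: 'a set)) \<subseteq> {CHAR('a)}"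
    by auto
  then have "(\<Prod>p\<in>prime_factors (card (UNIV :: 'a set)). p ^ multiplicity p (card (UNIV :: 'a set)))
      = CHAR('a) ^ multiplicity CHAR('a) (card (UNIV :: 'a set))"
    using prime_CHAR_finite_field[where 'a='a] by (auto simp: subset_singleton_iff prime_factors_multiplicity)
  then show ?thesis
    using prod_prime_factors[of "card (UNIV :: 'a set)"] finite_UNIV_card_ge_0[where ?'a='a] by auto
qed

lemma power_card_finite_field_add:
  fixes x y :: "'b::comm_semiring_1"
  assumes "CHAR('b) = CHAR('a::{finite,field})"
  shows "(x + y) ^ card (UNIV :: 'a set) = x ^ card (UNIV :: 'a set) + y ^ card (UNIV :: 'a set)"
proof -
  obtain k where "card (UNIV :: 'a set) = CHAR('a) ^ k"
    using card_finite_field_eq_CHAR_power by blast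
  then show ?thesis
    using assms prime_CHAR_finite_field[where 'a='a] by (intro freshmans_dream') simp_all
qed

lemma of_nat_ne_zero_if_coprime_card:
  assumes "CHAR('b::semiring_1) = CHAR('a::{finite,field})" "coprime m (card (UNIV :: 'a set))"
  shows "of_nat m \<noteq> (0::'b)"
proof
  assume "of_nat m = (0::'b)"
  then have "CHAR('a) dvd m"
    using assms(1) by (simp add: of_nat_eq_0_iff_char_dvd)
  moreover have "CHAR('a) dvd card (UNIV :: 'a set)"
    by (rule CHAR_dvd_CARD)
  ultimately have "CHAR('a) = 1"
    using assms(2) by (metis coprime_common_divisor_nat)
  then show False
    using prime_CHAR_finite_field[where 'a='a] by simp
qed

section \<open>Lucas sequences\<close>

fun lucas_U :: "'a::comm_ring_1 \<Rightarrow> nat \<Rightarrow> 'a" where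
  "lucas_U s 0 = 0"
| "lucas_U s (Suc 0) = 1"
| "lucas_U s (Suc (Suc k)) = s * lucas_U s (Suc k) - lucas_U s k"

lemma lucas_U_sum_inverse:
  fixes t :: "'a::field"
  assumes "t \<noteq> 0"
  shows "(t - inverse t) * lucas_U (t + inverse t) k = t ^ k - inverse t ^ k"
proof (induction k rule: induct_nat_012)
  case (ge2 k)
  have "(t - inverse t) * lucas_U (t + inverse t) (Suc (Suc k))
      = (t + inverse t) * ((t - inverse t) * lucas_U (t + inverse t) (Suc k))
        - (t - inverse t) * lucas_U (t + inverse t) k"
    by (simp add: algebra_simps)
  also have "\<dots> = (t + inverse t) * (t ^ Suc k - inverse t ^ Suc k) - (t ^ k - inverse t ^ k)"
    by (simp only: ge2)
  also have "\<dots> = t ^ Suc (Suc k) - inverse t ^ Suc (Suc k)"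
    using assms by (simp add: field_simps flip: power_inverse)
  finally show ?case .
qed simp_all

lemma lucas_U_double:
  fixes t :: "'a::field"
  assumes "t * t = 1"
  shows "lucas_U (2 * t) k * t = of_nat k * t ^ k"
proof (induction k rule: induct_nat_012)
  case (ge2 k)
  have "lucas_U (2 * t) (Suc (Suc k)) * t
      = 2 * t * (lucas_U (2 * t) (Suc k) * t) - lucas_U (2 * t) k * t"
    by (simp add: algebra_simps)
  also have "\<dots> = 2 * t * (of_nat (Suc k) * t ^ Suc k) - of_nat k * t ^ k"
    by (simp only: ge2)
  also have "\<dots> = of_nat (Suc (Suc k)) * t ^ Suc (Suc k)"
  proof -
    have "t ^ Suc (Suc k) = t ^ k"
      using assms by (simp add: mult.assoc[symmetric])
    then show ?thesis
      using assms by (simp add: algebra_simps)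
  qed
  finally show ?case .
qed simp_all

lemma lucas_U_eq_0_imp_root_of_unity:
  fixes t :: "'a::field"
  assumes t: "t \<noteq> 0" and U: "lucas_U (t + inverse t) N = 0" and N: "of_nat N \<noteq> (0::'a)"
  shows "t ^ (2 * N) = 1" and "t ^ 2 \<noteq> 1"
proof -
  show "t ^ 2 \<noteq> 1"
  proof
    assume "t ^ 2 = 1"
    then have tt: "t * t = 1" and "t + inverse t = 2 * t"
      using t by (simp_all add: power2_eq_square field_simps)
    then have "of_nat N * t ^ N = 0"
      using U lucas_U_double[OF tt, of N] by simp
    then show False
      using t N by simp
  qed
  then have "t - inverse t \<noteq> 0"
    using t by (simp add: power2_eq_square field_simps)
  then have "t ^ N = inverse t ^ N"
    using lucas_U_sum_inverse[OF t, of N] U by simp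
  then have "t ^ N * t ^ N = 1"
    using t by (simp add: field_simps flip: power_inverse)
  then show "t ^ (2 * N) = 1"
    by (simp add: mult_2 power_add)
qed

section \<open>Eigenvectors of tridiagonal Toeplitz matrices\<close>

text \<open>The i-th entry of T_n(b) y for a vector y given as a function on indices; only
  y 0, ..., y (n - 1) are read.\<close>

definition tridiag_apply :: "nat \<Rightarrow> 'a::comm_ring_1 \<Rightarrow> (nat \<Rightarrow> 'a) \<Rightarrow> nat \<Rightarrow> 'a" where
  "tridiag_apply n b y i =
     (if 0 < i then y (i - 1) else 0) + b * y i + (if i + 1 < n then y (i + 1) else 0)"

lemma tridiag_apply_diff:
  "tridiag_apply n b (\<lambda>i. y i - c * z i) i = tridiag_apply n b y i - c * tridiag_apply n b z i"
  by (simp add: tridiag_apply_def algebra_simps)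

lemma tridiag_apply_cong:
  assumes "\<And>j. j < n \<Longrightarrow> y j = z j" "i < n"
  shows "tridiag_apply n b y i = tridiag_apply n b z i"
  using assms by (simp add: tridiag_apply_def)

lemma tridiag_eigenvector_imp_lucas_U_eq_0:
  fixes y :: "nat \<Rightarrow> 'a::field"
  assumes eig: "\<And>i. i < n \<Longrightarrow> tridiag_apply n b y i = \<nu> * y i"
    and nz: "i0 < n" "y i0 \<noteq> 0"
  shows "lucas_U (\<nu> - b) (n + 1) = 0"
proof -
  \<comment> \<open>Padded with z 0 = z (n + 1) = 0, the eigenvector satisfies the Lucas recurrence.\<close>
  define z where "z k = (if 1 \<le> k \<and> k \<le> n then y (k - 1) else 0)" for k
  have z: "z k = z 1 * lucas_U (\<nu> - b) k" if "k \<le> n + 1" for k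
    using that
  proof (induction k rule: induct_nat_012)
    case (ge2 j)
    have "z (Suc (Suc j)) = (\<nu> - b) * z (Suc j) - z j"
      using eig[of j] ge2.prems by (auto simp: z_def tridiag_apply_def algebra_simps)
    then show ?case
      using ge2 by (simp add: algebra_simps)
  qed (simp_all add: z_def)
  have "z 1 \<noteq> 0"
    using z[of "Suc i0"] nz by (auto simp: z_def)
  moreover have "z (n + 1) = 0"
    by (simp add: z_def)
  ultimately show ?thesis
    using z[of "n + 1"] by simp
qed

text \<open>Since T^2 + 1 = (T + \<mu>)(T - \<mu>), a kernel vector of T^2 + 1 yields an eigenvector
  of T for \<mu> or for -\<mu>.\<close>

lemma tridiag_square_eq_neg_imp_lucas_U_eq_0:
  fixes x :: "nat \<Rightarrow> 'a::field" and \<mu> :: 'a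
  assumes eq: "\<And>i. i < n \<Longrightarrow> x i + tridiag_apply n b (tridiag_apply n b x) i = 0"
    and nz: "i0 < n" "x i0 \<noteq> 0"
    and \<mu>: "\<mu> ^ 2 = -1"
  shows "\<exists>\<nu>. \<nu> ^ 2 = -1 \<and> lucas_U (\<nu> - b) (n + 1) = 0"
proof (cases "\<exists>i<n. tridiag_apply n b x i - \<mu> * x i \<noteq> 0")
  case True
  then obtain i1 where i1: "i1 < n" "tridiag_apply n b x i1 - \<mu> * x i1 \<noteq> 0"
    by blast
  define w where "w i = tridiag_apply n b x i - \<mu> * x i" for i
  have "\<mu> * (\<mu> * x i) = - x i" for i
    using \<mu> by (simp add: power2_eq_square flip: mult.assoc)
  then have "tridiag_apply n b w i = - \<mu> * w i" if "i < n" for i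
    using eq[OF that] unfolding w_def tridiag_apply_diff
    by (simp add: algebra_simps add_eq_0_iff)
  then have "lucas_U (- \<mu> - b) (n + 1) = 0"
    by (rule tridiag_eigenvector_imp_lucas_U_eq_0) (use i1 in \<open>simp_all add: w_def\<close>)
  then show ?thesis
    using \<mu> by (intro exI[of _ "- \<mu>"]) simp
next
  case False
  then have "lucas_U (\<mu> - b) (n + 1) = 0"
    using tridiag_eigenvector_imp_lucas_U_eq_0[of n b x \<mu>] nz by auto
  then show ?thesis
    using \<mu> by blast
qed

section \<open>The Frobenius argument\<close>

lemma sum_inverse_eq_sum_inverse_iff:
  fixes t u :: "'a::field"
  assumes "t \<noteq> 0" "u \<noteq> 0"
  shows "u + inverse u = t + inverse t \<longleftrightarrow> u = t \<or> u = inverse t"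
proof -
  have "(u - t) * (u - inverse t) = u * ((u + inverse u) - (t + inverse t))"
    using assms by (simp add: field_simps)
  then show ?thesis
    using assms by auto
qed

lemma frobenius_fixes_sum_inverse:
  fixes t :: "'a::field"
  assumes frob: "\<And>x y::'a. (x + y) ^ Q = x ^ Q + y ^ Q"
    and t: "t \<noteq> 0" and fixed: "(t + inverse t) ^ Q = t + inverse t" and Q: "Q \<ge> 1"
  shows "t ^ (Q - 1) = 1 \<or> t ^ (Q + 1) = 1"
proof -
  have "t ^ Q + inverse (t ^ Q) = t + inverse t"
    using fixed frob[of t "inverse t"] by (simp add: power_inverse)
  then have "t ^ Q = t \<or> t ^ Q = inverse t"
    using t by (simp add: sum_inverse_eq_sum_inverse_iff)
  moreover have "t ^ Q = t ^ (Q - 1) * t"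
    using Q by (simp flip: power_Suc2)
  ultimately show ?thesis
    using t by (auto simp: field_simps)
qed

lemma frobenius_square_fixes_sum_inverse:
  fixes t :: "'a::field"
  assumes frob: "\<And>x y::'a. (x + y) ^ Q = x ^ Q + y ^ Q"
    and t: "t \<noteq> 0" and fixed: "(t + inverse t) ^ (Q * Q) = t + inverse t" and Q: "Q \<ge> 1"
  shows "t ^ (Q ^ 4 - 1) = 1"
proof -
  have "(x + y) ^ (Q * Q) = x ^ (Q * Q) + y ^ (Q * Q)" for x y :: 'a
    by (simp add: power_mult frob)
  then have "t ^ (Q * Q - 1) = 1 \<or> t ^ (Q * Q + 1) = 1"
    using frobenius_fixes_sum_inverse[OF _ t fixed] Q by simp
  then have "t ^ ((Q * Q - 1) * (Q * Q + 1)) = 1"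
  proof
    assume "t ^ (Q * Q - 1) = 1"
    then show ?thesis
      by (simp only: power_mult power_one)
  next
    assume "t ^ (Q * Q + 1) = 1"
    then show ?thesis
      by (simp only: mult.commute[of "Q * Q - 1"] power_mult power_one)
  qed
  moreover have "(Q * Q - 1) * (Q * Q + 1) = Q ^ 4 - 1"
    using Q by (simp add: power4_eq_xxxx diff_mult_distrib)
  ultimately show ?thesis
    by simp
qed

lemma frobenius_diff:
  fixes x y :: "'a::ring_1"
  assumes frob: "\<And>x y::'a. (x + y) ^ Q = x ^ Q + y ^ Q"
  shows "(x - y) ^ Q = x ^ Q - y ^ Q"
  using frob[of "x - y" y] by (simp add: algebra_simps)

lemma power_eq_1_if_gcd_dvd:
  fixes t :: "'a::comm_monoid_mult"
  assumes "t ^ a = 1" "t ^ b = 1" "gcd a b dvd c"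
  shows "t ^ c = 1"
proof -
  have "t ^ gcd a b = 1"
  proof (cases "a = 0")
    case False
    then obtain x y where xy: "a * x = b * y + gcd a b"
      using bezout_nat by blast
    have "t ^ gcd a b = t ^ (b * y) * t ^ gcd a b"
      using assms(2) by (simp add: power_mult)
    also have "\<dots> = t ^ (a * x)"
      by (simp add: xy power_add)
    also have "\<dots> = 1"
      using assms(1) by (simp add: power_mult)
    finally show ?thesis .
  qed (use assms(2) in simp)
  then show ?thesis
    using assms(3) by (auto elim!: dvdE simp: power_mult)
qed

lemma alg_closed_ex_sum_inverse_eq:
  "\<exists>t::'a::alg_closed_field. t \<noteq> 0 \<and> t + inverse t = s"
proof -
  obtain t :: 'a where "poly [:1, -s, 1:] t = 0"
    using alg_closed_imp_poly_has_root[of "[:1, -s, 1:]"] by auto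
  then have "t * t + 1 = s * t"
    by (simp add: algebra_simps)
  moreover from this have "t \<noteq> 0"
    by auto
  ultimately show ?thesis
    by (intro exI[of _ t]) (simp add: field_simps)
qed

lemma alg_closed_ex_sqrt_neg_1: "\<exists>\<mu>::'a::alg_closed_field. \<mu> ^ 2 = -1"
proof -
  obtain \<mu> :: 'a where \<mu>: "\<mu> \<noteq> 0" "\<mu> + inverse \<mu> = 0"
    using alg_closed_ex_sum_inverse_eq by blast
  have "\<mu> * \<mu> + 1 = \<mu> * (\<mu> + inverse \<mu>)"
    using \<mu>(1) by (simp add: distrib_left)
  then have "\<mu> * \<mu> + 1 = 0"
    using \<mu>(2) by simp
  then have "\<mu> * \<mu> = -1"
    by (rule eq_neg_iff_add_eq_0[THEN iffD2])
  then show ?thesis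
    by (auto simp: power2_eq_square)
qed

lemma lucas_U_ne_0_if_mod4_eq_1:
  fixes b v :: "'a::alg_closed_field"
  assumes frob: "\<And>x y::'a. (x + y) ^ Q = x ^ Q + y ^ Q"
    and b: "b ^ Q = b" and v: "v ^ 2 = -1" and Q: "Q mod 4 = 1"
    and N: "of_nat N \<noteq> (0::'a)"
    and gcd: "gcd (2 * N) (Q - 1) dvd 2" "gcd (2 * N) (Q + 1) dvd 2"
  shows "lucas_U (v - b) N \<noteq> 0"
proof
  assume "lucas_U (v - b) N = 0"
  moreover obtain t where t: "t \<noteq> 0" "t + inverse t = v - b"
    using alg_closed_ex_sum_inverse_eq by blast
  ultimately have root: "t ^ (2 * N) = 1" "t ^ 2 \<noteq> 1"
    using lucas_U_eq_0_imp_root_of_unity[OF t(1) _ N] by simp_all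
  obtain k where "Q = 4 * k + 1"
    using Q by (metis mod_mult_div_eq add.commute mult.commute)
  moreover have "v ^ 4 = 1"
    using v power_mult[of v 2 2] by simp
  ultimately have "v ^ Q = v"
    by (simp add: power_add power_mult)
  then have "(v - b) ^ Q = v - b"
    using frobenius_diff[OF frob] b by simp
  then have "(t + inverse t) ^ Q = t + inverse t"
    using t(2) by simp
  then have "t ^ (Q - 1) = 1 \<or> t ^ (Q + 1) = 1"
    using frobenius_fixes_sum_inverse[OF frob t(1)] Q by simp
  then have "t ^ 2 = 1"
    using power_eq_1_if_gcd_dvd[OF root(1)] gcd by blast
  then show False
    using root(2) by simp
qed

lemma lucas_U_ne_0_if_mod4_eq_3:
  fixes b v :: "'a::alg_closed_field"
  assumes frob: "\<And>x y::'a. (x + y) ^ Q = x ^ Q + y ^ Q"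
    and b: "b ^ Q = b" and v: "v ^ 2 = -1" and Q: "Q mod 4 = 3"
    and N: "of_nat N \<noteq> (0::'a)" and two: "(2::'a) \<noteq> 0"
    and gcd: "gcd (2 * N) (Q ^ 4 - 1) dvd Q - 1"
  shows "lucas_U (v - b) N \<noteq> 0"
proof
  assume "lucas_U (v - b) N = 0"
  moreover obtain t where t: "t \<noteq> 0" "t + inverse t = v - b"
    using alg_closed_ex_sum_inverse_eq by blast
  ultimately have root: "t ^ (2 * N) = 1" "t ^ 2 \<noteq> 1"
    using lucas_U_eq_0_imp_root_of_unity[OF t(1) _ N] by simp_all
  obtain k where k: "Q = 4 * k + 3"
    using Q by (metis mod_mult_div_eq add.commute mult.commute)
  then have Q1: "Q \<ge> 1"
    by simp
  have "Q = 2 * (2 * k + 1) + 1"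
    using k by simp
  then have vQ: "v ^ Q = - v"
    using v by (simp only: power_add power_mult power_one_right) simp
  have oddQ: "(- x) ^ Q = - (x ^ Q)" for x :: 'a
    using k by (simp add: power_minus_odd)
  have sQ: "(v - b) ^ Q = - v - b"
    using frobenius_diff[OF frob] vQ b by simp
  have "(- v - b) ^ Q = v - b"
    using frobenius_diff[OF frob, of "- v" b] oddQ[of v] vQ b by simp
  then have "(t + inverse t) ^ (Q * Q) = t + inverse t"
    using sQ t(2) by (simp add: power_mult)
  then have "t ^ (Q ^ 4 - 1) = 1"
    by (rule frobenius_square_fixes_sum_inverse[OF frob t(1) _ Q1])
  then have "t ^ (Q - 1) = 1"
    using power_eq_1_if_gcd_dvd[OF root(1) _ gcd] by blast
  moreover have "t ^ Q = t ^ (Q - 1) * t"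
    using Q1 by (simp flip: power_Suc2)
  ultimately have "t ^ Q = t"
    by simp
  then have "(v - b) ^ Q = v - b"
    using frob[of t "inverse t"] t(2) by (simp add: power_inverse)
  then have "v = 0"
    using sQ two by (simp add: algebra_simps)
  then show False
    using v by simp
qed

section \<open>The codes C_n(a)\<close>

lemma is_LCD_code_of:
  fixes G :: "'a::field mat"
  assumes G: "G \<in> carrier_mat k N"
    and ker: "\<And>x. x \<in> carrier_vec k \<Longrightarrow> (G * transpose_mat G) *\<^sub>v x = 0\<^sub>v k \<Longrightarrow> x = 0\<^sub>v k"
  shows "is_LCD N (code_of G)"
  unfolding is_LCD_def
proof (intro equalityI subsetI)
  fix c assume "c \<in> code_of G \<inter> dual_code N (code_of G)"
  then obtain x where x: "x \<in> carrier_vec k" and c: "c = transpose_mat G *\<^sub>v x"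
    and dual: "\<And>y. y \<in> carrier_vec k \<Longrightarrow> (transpose_mat G *\<^sub>v y) \<bullet> c = 0"
    using G by (auto simp: code_of_def dual_code_def)
  have "(G * transpose_mat G) *\<^sub>v x = 0\<^sub>v k"
  proof (rule eq_vecI)
    fix i assume "i < dim_vec (0\<^sub>v k :: 'a vec)"
    then have i: "i < k"
      by simp
    have "((G * transpose_mat G) *\<^sub>v x) $ i = unit_vec k i \<bullet> (G *\<^sub>v c)"
      using G x i c by simp
    also have "\<dots> = (transpose_mat G *\<^sub>v unit_vec k i) \<bullet> c"
      using G x c by (simp add: transpose_vec_mult_scalar)
    also have "\<dots> = 0"
      using dual i by simp
    finally show "((G * transpose_mat G) *\<^sub>v x) $ i = (0\<^sub>v k :: 'a vec) $ i"
      using i by simp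
  qed (use G in simp)
  then have "x = 0\<^sub>v k"
    using ker x by blast
  then show "c \<in> {0\<^sub>v N}"
    using G c by auto
next
  fix c :: "'a vec" assume "c \<in> {0\<^sub>v N}"
  then have c: "c = 0\<^sub>v N"
    by simp
  have "c = transpose_mat G *\<^sub>v 0\<^sub>v k"
    using G c by auto
  then have "c \<in> code_of G"
    using G by (auto simp: code_of_def)
  moreover have "c \<in> dual_code N (code_of G)"
    using G c by (auto simp: code_of_def dual_code_def)
  ultimately show "c \<in> code_of G \<inter> dual_code N (code_of G)"
    by blast
qed

lemma gen_matrix_mult_transpose:
  "gen_matrix n a * transpose_mat (gen_matrix n a)
     = 1\<^sub>m n + tridiag_toeplitz n a * tridiag_toeplitz n a"
proof (rule eq_matI)
  let ?G = "gen_matrix n a" and ?T = "tridiag_toeplitz n a"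
  fix i j assume "i < dim_row (1\<^sub>m n + ?T * ?T)" "j < dim_col (1\<^sub>m n + ?T * ?T)"
  then have ij: "i < n" "j < n"
    by (simp_all add: tridiag_toeplitz_def)
  have "(?G * transpose_mat ?G) $$ (i, j) = (\<Sum>k = 0..<n + n. ?G $$ (i, k) * ?G $$ (j, k))"
    using ij by (simp add: gen_matrix_def scalar_prod_def mult_2)
  also have "\<dots> = (\<Sum>k = 0..<n. ?G $$ (i, k) * ?G $$ (j, k))
      + (\<Sum>k = 0..<n. ?G $$ (i, k + n) * ?G $$ (j, k + n))"
    using sum.shift_bounds_nat_ivl[of "\<lambda>k. ?G $$ (i, k) * ?G $$ (j, k)" 0 n n]
    by (simp add: sum.atLeastLessThan_concat[of 0 n "n + n", symmetric])
  also have "(\<Sum>k = 0..<n. ?G $$ (i, k) * ?G $$ (j, k))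
      = (\<Sum>k = 0..<n. if k = i then 1\<^sub>m n $$ (i, j) else 0)"
    using ij by (intro sum.cong) (auto simp: gen_matrix_def)
  also have "\<dots> = 1\<^sub>m n $$ (i, j)"
    using ij by simp
  also have "(\<Sum>k = 0..<n. ?G $$ (i, k + n) * ?G $$ (j, k + n))
      = (\<Sum>k = 0..<n. ?T $$ (i, k) * ?T $$ (k, j))"
    using ij by (intro sum.cong) (auto simp: gen_matrix_def tridiag_toeplitz_def)
  also have "\<dots> = (?T * ?T) $$ (i, j)"
    using ij by (simp add: tridiag_toeplitz_def scalar_prod_def)
  finally show "(?G * transpose_mat ?G) $$ (i, j) = (1\<^sub>m n + ?T * ?T) $$ (i, j)"
    using ij by (simp add: tridiag_toeplitz_def)
qed (simp_all add: gen_matrix_def tridiag_toeplitz_def)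

lemma tridiag_toeplitz_mult_vec:
  assumes "x \<in> carrier_vec n" "i < n"
  shows "(tridiag_toeplitz n a *\<^sub>v x) $ i = tridiag_apply n a (\<lambda>j. x $ j) i"
proof -
  have "(tridiag_toeplitz n a *\<^sub>v x) $ i
      = (\<Sum>j = 0..<n. (if j = i then a * x $ j else 0) + (if j + 1 = i then x $ j else 0)
          + (if j = i + 1 then x $ j else 0))"
    using assms by (auto simp: tridiag_toeplitz_def scalar_prod_def intro!: sum.cong)
  also have "\<dots> = tridiag_apply n a (\<lambda>j. x $ j) i"
    using assms by (cases i) (auto simp: tridiag_apply_def sum.distrib sum.delta')
  finally show ?thesis .
qed

lemma tridiag_toeplitz_carrier [simp]: "tridiag_toeplitz n a \<in> carrier_mat n n"
  by (simp add: tridiag_toeplitz_def)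

lemma C_code_is_LCD_if_tridiag_kernel_trivial:
  fixes a :: "'a::field"
  assumes ker: "\<And>x. \<forall>i<n. x i + tridiag_apply n a (tridiag_apply n a x) i = 0 \<Longrightarrow> \<forall>i<n. x i = 0"
  shows "is_LCD (2 * n) (C_code n a)"
  unfolding C_code_def
proof (rule is_LCD_code_of)
  show "gen_matrix n a \<in> carrier_mat n (2 * n)"
    by (simp add: gen_matrix_def)
next
  let ?T = "tridiag_toeplitz n a"
  fix x :: "'a vec"
  assume x: "x \<in> carrier_vec n"
    and "(gen_matrix n a * transpose_mat (gen_matrix n a)) *\<^sub>v x = 0\<^sub>v n"
  moreover have "(1\<^sub>m n + ?T * ?T) *\<^sub>v x = x + ?T *\<^sub>v (?T *\<^sub>v x)"
    using x by (subst add_mult_distrib_mat_vec[of _ n n])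
      (auto simp: mult_carrier_mat[of _ n n] assoc_mult_mat_vec[of _ n n _ n])
  ultimately have eq: "x + ?T *\<^sub>v (?T *\<^sub>v x) = 0\<^sub>v n"
    by (simp add: gen_matrix_mult_transpose)
  have "x $ i + tridiag_apply n a (tridiag_apply n a (\<lambda>j. x $ j)) i = 0" if i: "i < n" for i
  proof -
    have "(?T *\<^sub>v (?T *\<^sub>v x)) $ i = tridiag_apply n a (\<lambda>j. (?T *\<^sub>v x) $ j) i"
      by (rule tridiag_toeplitz_mult_vec) (use x i in \<open>auto intro: mult_mat_vec_carrier[of _ n n]\<close>)
    also have "\<dots> = tridiag_apply n a (tridiag_apply n a (\<lambda>j. x $ j)) i"
      using x i by (intro tridiag_apply_cong) (simp_all add: tridiag_toeplitz_mult_vec)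
    finally show ?thesis
      using arg_cong[OF eq, of "\<lambda>v. vec_index v i"] x i by (simp add: carrier_matD[OF tridiag_toeplitz_carrier])
  qed
  then have "\<forall>i<n. x $ i + tridiag_apply n a (tridiag_apply n a (\<lambda>j. x $ j)) i = 0"
    by blast
  then have "\<forall>i<n. x $ i = 0"
    by (rule ker)
  then show "x = 0\<^sub>v n"
    using x by (intro eq_vecI) auto
qed

lemma tridiag_apply_to_ac:
  "tridiag_apply n (to_ac a) (\<lambda>i. to_ac (y i)) = (\<lambda>i. to_ac (tridiag_apply n a y i))"
  by (rule ext) (simp add: tridiag_apply_def)

lemma C_code_is_LCD_if_lucas_U_ne_0:
  fixes a :: "'a::field"
  assumes U: "\<And>v::'a alg_closure. v ^ 2 = -1 \<Longrightarrow> lucas_U (v - to_ac a) (n + 1) \<noteq> 0"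
  shows "is_LCD (2 * n) (C_code n a)"
proof (rule C_code_is_LCD_if_tridiag_kernel_trivial, rule ccontr)
  fix x :: "nat \<Rightarrow> 'a"
  assume eq: "\<forall>i<n. x i + tridiag_apply n a (tridiag_apply n a x) i = 0"
    and "\<not> (\<forall>i<n. x i = 0)"
  then obtain i0 where i0: "i0 < n" "x i0 \<noteq> 0"
    by blast
  have "to_ac (x i) + tridiag_apply n (to_ac a) (tridiag_apply n (to_ac a) (\<lambda>i. to_ac (x i))) i = 0"
    if "i < n" for i
  proof -
    have "to_ac (x i) + tridiag_apply n (to_ac a) (tridiag_apply n (to_ac a) (\<lambda>i. to_ac (x i))) i
        = to_ac (x i + tridiag_apply n a (tridiag_apply n a x) i)"
      by (simp add: tridiag_apply_to_ac)
    also have "\<dots> = 0"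
      using eq that by simp
    finally show ?thesis .
  qed
  moreover obtain \<mu> :: "'a alg_closure" where "\<mu> ^ 2 = -1"
    using alg_closed_ex_sqrt_neg_1 by blast
  ultimately obtain v :: "'a alg_closure" where "v ^ 2 = -1" "lucas_U (v - to_ac a) (n + 1) = 0"
    using tridiag_square_eq_neg_imp_lucas_U_eq_0[of n "\<lambda>i. to_ac (x i)" "to_ac a" i0 \<mu>] i0
    by auto
  then show False
    using U by blast
qed

lemma coprime_factors_if_coprime_half_q_cube_minus_q:
  fixes N q :: nat
  assumes "odd q" "coprime N (q * (q ^ 2 - 1) div 2)"
  shows "coprime N q" "coprime N (q - 1)" "coprime N (q + 1)"
proof -
  obtain j where q: "q = 2 * j + 1"
    using assms(1) by (auto elim: oddE)
  have "q * (q ^ 2 - 1) div 2 = q * ((q - 1) * (j + 1))" "q * (q ^ 2 - 1) div 2 = q * ((q + 1) * j)"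
    unfolding q by (simp_all add: power2_eq_square algebra_simps)
  then show "coprime N q" "coprime N (q - 1)" "coprime N (q + 1)"
    using assms(2) by (metis coprime_mult_right_iff)+
qed

lemma gcd_double_dvd_2_if_coprime: "coprime (N::nat) m \<Longrightarrow> gcd (2 * N) m dvd 2"
  by (metis coprime_commute coprime_divisors coprime_dvd_mult_left_iff dvd_refl gcd_dvd1 gcd_dvd2)

lemma gcd_double_dvd_if_gcd_half_dvd_half:
  fixes N m d :: nat
  assumes "even m" "even d" "gcd N (m div 2) dvd d div 2"
  shows "gcd (2 * N) m dvd d"
proof -
  have "gcd (2 * N) m = 2 * gcd N (m div 2)"
    using assms(1) by (metis gcd_mult_distrib_nat dvd_mult_div_cancel)
  then show ?thesis
    using assms(2,3) by (metis dvd_mult_div_cancel mult_dvd_mono dvd_refl)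
qed

theorem corollary2p4:
  fixes q n :: nat
  assumes q: "q = card (UNIV :: 'a::{finite,field} set)"
    and odd_q: "odd q"
    and n: "n \<ge> 1"
  shows "(q mod 4 = 1 \<and> gcd (n + 1) (q * (q^2 - 1) div 2) = 1 \<longrightarrow>
           (\<forall>\<mu>::'a. \<mu>^2 = -1 \<longrightarrow>
              (\<forall>a::'a. a \<notin> {\<mu> + 2, -\<mu> + 2, \<mu> - 2, -\<mu> - 2} \<longrightarrow>
                 is_LCD (2*n) (C_code n a))))
       \<and> (q mod 4 = 3 \<and> gcd (n + 1) q = 1 \<and>
            gcd (n + 1) ((q^4 - 1) div 2) dvd (q - 1) div 2 \<longrightarrow>
           (\<forall>a::'a. is_LCD (2*n) (C_code n a)))"
proof -
  have frob: "(x + y) ^ q = x ^ q + y ^ q" for x y :: "'a alg_closure"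
    unfolding q by (rule power_card_finite_field_add) simp
  have fixed: "to_ac a ^ q = to_ac a" for a :: 'a
    unfolding q by (simp flip: to_ac_power add: power_card_finite_field)
  have nonzero: "of_nat m \<noteq> (0 :: 'a alg_closure)" if "coprime m q" for m
    using that unfolding q by (intro of_nat_ne_zero_if_coprime_card) simp
  show ?thesis
  proof (intro conjI impI allI)
    fix a :: 'a
    assume "q mod 4 = 1 \<and> gcd (n + 1) (q * (q^2 - 1) div 2) = 1"
    then have q1: "q mod 4 = 1" and "coprime (n + 1) (q * (q^2 - 1) div 2)"
      by (simp_all add: coprime_iff_gcd_eq_1)
    then have "coprime (n + 1) q" "coprime (n + 1) (q - 1)" "coprime (n + 1) (q + 1)"
      using coprime_factors_if_coprime_half_q_cube_minus_q odd_q by blast+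
    then show "is_LCD (2 * n) (C_code n a)"
      by (intro C_code_is_LCD_if_lucas_U_ne_0 lucas_U_ne_0_if_mod4_eq_1[OF frob fixed _ q1]
          nonzero gcd_double_dvd_2_if_coprime)
  next
    fix a :: 'a
    assume h: "q mod 4 = 3 \<and> gcd (n + 1) q = 1 \<and> gcd (n + 1) ((q^4 - 1) div 2) dvd (q - 1) div 2"
    then have q3: "q mod 4 = 3" and "coprime (n + 1) q"
      by (simp_all add: coprime_iff_gcd_eq_1)
    moreover have "gcd (2 * (n + 1)) (q ^ 4 - 1) dvd q - 1"
      using h odd_q by (intro gcd_double_dvd_if_gcd_half_dvd_half) simp_all
    moreover have "(2 :: 'a alg_closure) \<noteq> 0"
      using nonzero[of 2] odd_q by simp
    ultimately show "is_LCD (2 * n) (C_code n a)"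
      by (intro C_code_is_LCD_if_lucas_U_ne_0 lucas_U_ne_0_if_mod4_eq_3[OF frob fixed _ q3] nonzero)
  qed
qed

end
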